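(* Let $F=\{f_i\}_{i=1}^N$ be a frame for $\mathcal H$. If $(F,S_F^{-1}F)\in\mathcal N^{(1)}$, then $\{S_F^{-1/2}f_i\}_{i=1}^N$ is an equal norm Parseval frame. In addition, if $G$ is any dual of $F$ with $(F,G)\in\mathcal N^{(1)}$, then $G=S_F^{-1}F$.
   Context: $\mathcal H$ is a complex Hilbert space of finite dimension $n$, inner product linear in the first argument, $N\ge n$. A finite sequence $F=\{f_i\}_{i=1}^N$ is a frame if there are $0<A\le B$ with $A\|f\|^2\le\sum_i|\langle f,f_i\rangle|^2\le B\|f\|^2$ for all $f$; Parseval if $\sum_i|\langle f,f_i\rangle|^2=\|f\|^2$ for all $f$; equal norm if $\|f_i\|$ is constant. $S_Ff=\sum_i\langle f,f_i\rangle f_i$ is the (positive invertible) frame operator, $S_F^{-1/2}$ its inverse positive square root, $S_F^{-1}F=\{S_F^{-1}f_i\}$ the canonical dual. $G=\{g_i\}_{i=1}^N$ is a dual of $F$ if $f=\sum_i\langle f,g_i\rangle f_i$ for all $f$; $(F,G)$ is then an $(N,n)$ dual pair. $E_{\Lambda,F,G}f=\sum_{i\in\Lambda}\langle f,f_i\rangle g_i$. The numerical radius is $\omega(T)=\sup\{|\langle Tf,f\rangle|:\|f\|=1\}$; $\eta^{(1)}_{F,G}=\max_{1\le i\le N}\omega(E_{\{i\},F,G})$; $\eta^{(1)}=\inf\{\eta^{(1)}_{F,G}:(F,G)\text{ an }(N,n)\text{ dual pair}\}$; $\mathcal N^{(1)}=\{(F,G):\eta^{(1)}_{F,G}=\eta^{(1)}\}$.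 *)

theory Defs
  imports "HOL-Analysis.Analysis"
begin

text \<open>The n-dimensional complex Hilbert space is modelled as complex^'n with n = CARD('n);
  inner product linear in the first argument. Frames are indexed by {..<N} (0-based).\<close>

definition cinner :: "complex^'n \<Rightarrow> complex^'n \<Rightarrow> complex" where
  "cinner x y = (\<Sum>j\<in>UNIV. x $ j * cnj (y $ j))"

definition is_frame :: "nat \<Rightarrow> (nat \<Rightarrow> complex^'n) \<Rightarrow> bool" where
  "is_frame N F \<longleftrightarrow> (\<exists>A B. 0 < A \<and> A \<le> B \<and>
     (\<forall>f. A * (norm f)^2 \<le> (\<Sum>i<N. (cmod (cinner f (F i)))^2) \<and>
          (\<Sum>i<N. (cmod (cinner f (F i)))^2) \<le> B * (norm f)^2))"

definition is_parseval :: "nat \<Rightarrow> (nat \<Rightarrow> complex^'n) \<Rightarrow> bool" where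
  "is_parseval N F \<longleftrightarrow> (\<forall>f. (\<Sum>i<N. (cmod (cinner f (F i)))^2) = (norm f)^2)"

definition is_equal_norm :: "nat \<Rightarrow> (nat \<Rightarrow> complex^'n) \<Rightarrow> bool" where
  "is_equal_norm N F \<longleftrightarrow> (\<forall>i<N. \<forall>j<N. norm (F i) = norm (F j))"

definition frame_op :: "nat \<Rightarrow> (nat \<Rightarrow> complex^'n) \<Rightarrow> complex^'n \<Rightarrow> complex^'n" where
  "frame_op N F f = (\<Sum>i<N. cinner f (F i) *s F i)"

definition frame_op_inv :: "nat \<Rightarrow> (nat \<Rightarrow> complex^'n) \<Rightarrow> complex^'n \<Rightarrow> complex^'n" where
  "frame_op_inv N F = inv (frame_op N F)"

definition clinear_op :: "(complex^'n \<Rightarrow> complex^'n) \<Rightarrow> bool" where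
  "clinear_op T \<longleftrightarrow> (\<forall>x y. T (x + y) = T x + T y) \<and> (\<forall>c x. T (c *s x) = c *s T x)"

definition positive_op :: "(complex^'n \<Rightarrow> complex^'n) \<Rightarrow> bool" where
  "positive_op T \<longleftrightarrow> clinear_op T \<and> (\<forall>x. Im (cinner (T x) x) = 0 \<and> 0 \<le> Re (cinner (T x) x))"

definition frame_op_inv_sqrt :: "nat \<Rightarrow> (nat \<Rightarrow> complex^'n) \<Rightarrow> complex^'n \<Rightarrow> complex^'n" where
  "frame_op_inv_sqrt N F = (THE R. positive_op R \<and> (\<forall>x. R (R x) = frame_op_inv N F x))"

definition is_dual :: "nat \<Rightarrow> (nat \<Rightarrow> complex^'n) \<Rightarrow> (nat \<Rightarrow> complex^'n) \<Rightarrow> bool" where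
  "is_dual N F G \<longleftrightarrow> (\<forall>f. f = (\<Sum>i<N. cinner f (G i) *s F i))"

definition dual_pair :: "nat \<Rightarrow> (nat \<Rightarrow> complex^'n) \<Rightarrow> (nat \<Rightarrow> complex^'n) \<Rightarrow> bool" where
  "dual_pair N F G \<longleftrightarrow> is_frame N F \<and> is_dual N F G"

definition E_op :: "nat set \<Rightarrow> (nat \<Rightarrow> complex^'n) \<Rightarrow> (nat \<Rightarrow> complex^'n) \<Rightarrow> complex^'n \<Rightarrow> complex^'n" where
  "E_op \<Lambda> F G f = (\<Sum>i\<in>\<Lambda>. cinner f (F i) *s G i)"

definition num_radius :: "(complex^'n \<Rightarrow> complex^'n) \<Rightarrow> real" where
  "num_radius T = (SUP f\<in>{f. norm f = 1}. cmod (cinner (T f) f))"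

definition eta1_FG :: "nat \<Rightarrow> (nat \<Rightarrow> complex^'n) \<Rightarrow> (nat \<Rightarrow> complex^'n) \<Rightarrow> real" where
  "eta1_FG N F G = Max ((\<lambda>i. num_radius (E_op {i} F G)) ` {..<N})"

definition eta1 :: "nat \<Rightarrow> ('n::finite) itself \<Rightarrow> real" where
  "eta1 N (_::'n itself) = Inf {eta1_FG N F G | (F :: nat \<Rightarrow> complex^'n) G. dual_pair N F G}"

definition in_N1 :: "nat \<Rightarrow> (nat \<Rightarrow> complex^'n) \<Rightarrow> (nat \<Rightarrow> complex^'n) \<Rightarrow> bool" where
  "in_N1 N F G \<longleftrightarrow> dual_pair N F G \<and> eta1_FG N F G = eta1 N TYPE('n)"

end

theory Submission
  imports Defs
begin

(* The harmonic (discrete Fourier) frame shows eta^(1) <= n/N, so every optimal dual pair (F, G)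
   has eta^(1)_{F,G} <= n/N. For a dual pair the traces
   <F_i, G_i> of the rank-one operators E_{i} sum to n, and each is bounded by the numerical radius
   of E_{i}, hence by n/N; so all of them equal n/N. Equality in the numerical-radius bound forces
   G_i = (n/N) / |F_i|^2 F_i. For the canonical dual this says that every F_i is an eigenvector of
   S_F, so S_F^{-1/2} F_i = sqrt(c_i) F_i with c_i = (n/N)/|F_i|^2; the rescaled family is self-dual,
   hence Parseval, and all its vectors have norm sqrt(n/N). *)

lemma cinner_add_left: "cinner (x + y) z = cinner x z + cinner y z"
  by (simp add: cinner_def distrib_right sum.distrib)

lemma cinner_add_right: "cinner x (y + z) = cinner x y + cinner x z"
  by (simp add: cinner_def distrib_left sum.distrib)

lemma cinner_diff_left: "cinner (x - y) z = cinner x z - cinner y z"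
  by (simp add: cinner_def left_diff_distrib sum_subtractf)

lemma cinner_diff_right: "cinner x (y - z) = cinner x y - cinner x z"
  by (simp add: cinner_def right_diff_distrib sum_subtractf)

lemma cinner_smult_left: "cinner (c *s x) y = c * cinner x y"
  by (simp add: cinner_def sum_distrib_left mult.assoc)

lemma cinner_smult_right: "cinner x (c *s y) = cnj c * cinner x y"
  by (simp add: cinner_def sum_distrib_left algebra_simps)

lemma cinner_sum_left: "finite A \<Longrightarrow> cinner (\<Sum>i\<in>A. f i) y = (\<Sum>i\<in>A. cinner (f i) y)"
  unfolding cinner_def sum_component sum_distrib_right by (rule sum.swap)

lemma cinner_sum_right: "finite A \<Longrightarrow> cinner x (\<Sum>i\<in>A. f i) = (\<Sum>i\<in>A. cinner x (f i))"
  unfolding cinner_def sum_component cnj_sum sum_distrib_left by (rule sum.swap)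

lemma cinner_commute: "cinner y x = cnj (cinner x y)"
  by (simp add: cinner_def mult.commute)

lemma cinner_zero_left [simp]: "cinner 0 y = 0"
  by (simp add: cinner_def)

lemma cinner_zero_right [simp]: "cinner x 0 = 0"
  by (simp add: cinner_def)

lemma power2_norm_vec_complex: "(norm (x::complex^'n))^2 = (\<Sum>j\<in>UNIV. (cmod (x$j))^2)"
  by (simp add: norm_vec_def L2_set_def sum_nonneg)

lemma cinner_self: "cinner x x = complex_of_real ((norm x)^2)"
  unfolding power2_norm_vec_complex cinner_def of_real_sum
  by (rule sum.cong) (simp_all add: complex_mult_cnj cmod_power2)

lemma cinner_mult_cnj_self: "cinner x y * cinner y x = complex_of_real ((cmod (cinner x y))^2)"
  unfolding cinner_commute[of y x] complex_norm_square ..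

lemma Re_cinner: "Re (cinner x y) = inner x y"
  by (simp add: cinner_def inner_vec_def inner_complex_def)

lemma norm_smult_vec_complex: "norm (c *s (x::complex^'n)) = cmod c * norm x"
proof -
  have "(norm (c *s x))^2 = (cmod c)^2 * (norm x)^2"
    unfolding power2_norm_vec_complex by (simp add: power_mult_distrib norm_mult sum_distrib_left)
  hence "(norm (c *s x))^2 = (cmod c * norm x)^2" by (simp add: power_mult_distrib)
  thus ?thesis by simp
qed

lemma smult_sum_right: "(c::complex) *s (\<Sum>i\<in>A. f i) = (\<Sum>i\<in>A. c *s f i)"
  by (simp add: vec_eq_iff sum_distrib_left)

lemma scaleR_eq_smult_of_real: "(a::real) *\<^sub>R (x::complex^'n) = complex_of_real a *s x"
  unfolding vec_eq_iff vector_scaleR_component vector_smult_component by (simp add: scaleR_conv_of_real)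

text \<open>Rotating x by a unimodular scalar makes the complex inner product real, reducing to the real
  Cauchy-Schwarz inequality.\<close>
lemma cmod_cinner_le: "cmod (cinner x y) \<le> norm x * norm y"
proof (cases "cinner x y = 0")
  case True thus ?thesis by simp
next
  case False
  define u where "u = cnj (cinner x y) / cmod (cinner x y)"
  have "cnj (cinner x y) * cinner x y
      = complex_of_real (cmod (cinner x y)) * complex_of_real (cmod (cinner x y))"
    using complex_norm_square[of "cinner x y"] by (simp add: power2_eq_square mult.commute)
  hence "cinner (u *s x) y = complex_of_real (cmod (cinner x y))"
    using False by (simp add: cinner_smult_left u_def)
  hence "cmod (cinner x y) = inner (u *s x) y" by (simp add: Re_cinner[symmetric])
  also have "\<dots> \<le> norm (u *s x) * norm y"
    by (rule Cauchy_Schwarz_ineq2[THEN order_trans[OF abs_ge_self]])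
  also have "\<dots> = norm x * norm y"
    using False by (simp add: norm_smult_vec_complex u_def norm_divide)
  finally show ?thesis .
qed

lemma norm_axis_complex: "norm (axis k (1::complex) :: complex^'n) = 1"
proof -
  have "(norm (axis k (1::complex) :: complex^'n))^2 = 1"
    unfolding power2_norm_vec_complex axis_def vec_lambda_beta
    by (subst sum.cong[OF refl, of _ _ "\<lambda>j. if j = k then 1 else 0"]) auto
  thus ?thesis by (simp add: power2_eq_1_iff)
qed

lemma cinner_axis_left: "cinner (axis k 1) y = cnj (y $ k)"
proof -
  have "cinner (axis k 1) y = (\<Sum>j\<in>UNIV. if j = k then cnj (y $ k) else 0)"
    unfolding cinner_def axis_def by (rule sum.cong) auto
  thus ?thesis by simp
qed

lemma clinear_op_zero: "clinear_op L \<Longrightarrow> L 0 = 0"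
  unfolding clinear_op_def by (metis add_cancel_right_right)

lemma clinear_op_diff: "clinear_op L \<Longrightarrow> L (x - y) = L x - L y"
  unfolding clinear_op_def by (metis eq_diff_eq)

lemma clinear_op_sum:
  assumes "clinear_op L" and "finite A"
  shows "L (\<Sum>i\<in>A. f i) = (\<Sum>i\<in>A. L (f i))"
  using assms(2)
  by (induct A rule: finite_induct) (auto simp: clinear_op_zero[OF assms(1)] assms(1)[unfolded clinear_op_def])

lemma clinear_op_comp: "clinear_op L \<Longrightarrow> clinear_op M \<Longrightarrow> clinear_op (\<lambda>x. L (M x))"
  unfolding clinear_op_def by simp

lemma linear_if_clinear_op: "clinear_op L \<Longrightarrow> linear L"
  by (rule linearI) (simp_all add: clinear_op_def scaleR_eq_smult_of_real)

lemma clinear_op_dual_expansion: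
  assumes "clinear_op L" and "is_dual N F G"
  shows "L x = (\<Sum>i<N. cinner x (G i) *s L (F i))"
proof -
  have "L x = L (\<Sum>i<N. cinner x (G i) *s F i)"
    using assms(2) unfolding is_dual_def by metis
  also have "\<dots> = (\<Sum>i<N. cinner x (G i) *s L (F i))"
    using assms(1) by (simp add: clinear_op_sum) (simp add: clinear_op_def)
  finally show ?thesis .
qed

lemma clinear_op_eq_on_dual:
  assumes "clinear_op L" "clinear_op M" "is_dual N F G" "\<And>i. i < N \<Longrightarrow> L (F i) = M (F i)"
  shows "L = M"
proof
  fix x
  have "L x = (\<Sum>i<N. cinner x (G i) *s L (F i))"
    by (rule clinear_op_dual_expansion[OF assms(1,3)])
  also have "\<dots> = (\<Sum>i<N. cinner x (G i) *s M (F i))"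
    by (rule sum.cong) (simp_all add: assms(4))
  also have "\<dots> = M x"
    by (rule clinear_op_dual_expansion[OF assms(2,3), symmetric])
  finally show "L x = M x" .
qed

lemma is_dual_cong:
  assumes "\<And>i. i < N \<Longrightarrow> F i = F' i" "\<And>i. i < N \<Longrightarrow> G i = G' i"
  shows "is_dual N F G \<longleftrightarrow> is_dual N F' G'"
proof -
  have "(\<Sum>i<N. cinner f (G i) *s F i) = (\<Sum>i<N. cinner f (G' i) *s F' i)" for f
    by (rule sum.cong) (simp_all add: assms)
  thus ?thesis unfolding is_dual_def by simp
qed

lemma frame_op_clinear: "clinear_op (frame_op N F)"
  unfolding clinear_op_def frame_op_def
  by (simp add: cinner_add_left cinner_smult_left sum.distrib
      vec_eq_iff sum_distrib_left distrib_right mult.assoc)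

lemma frame_op_self_adjoint: "cinner (frame_op N F x) y = cinner x (frame_op N F y)"
proof -
  have "cinner (frame_op N F x) y = (\<Sum>i<N. cinner x (F i) * cinner (F i) y)"
    unfolding frame_op_def by (simp add: cinner_sum_left cinner_smult_left)
  also have "\<dots> = cinner x (frame_op N F y)"
    unfolding frame_op_def
    by (simp add: cinner_sum_right cinner_smult_right cinner_commute[of "F _" y] mult.commute)
  finally show ?thesis .
qed

lemma cinner_frame_op_self:
  "cinner (frame_op N F x) x = complex_of_real (\<Sum>i<N. (cmod (cinner x (F i)))^2)"
  unfolding frame_op_def
  by (simp add: cinner_sum_left cinner_smult_left cinner_mult_cnj_self)

lemma frame_op_bij:
  assumes "is_frame N F"
  shows "bij (frame_op N F)"
proof -
  obtain A where A: "0 < A" and lower: "\<And>f. A * (norm f)^2 \<le> (\<Sum>i<N. (cmod (cinner f (F i)))^2)"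
    using assms unfolding is_frame_def by blast
  have lin: "linear (frame_op N F)" by (rule linear_if_clinear_op[OF frame_op_clinear])
  have "x = 0" if "frame_op N F x = 0" for x
  proof -
    have "complex_of_real (\<Sum>i<N. (cmod (cinner x (F i)))^2) = 0"
      using that cinner_frame_op_self[of N F x] by simp
    hence "(\<Sum>i<N. (cmod (cinner x (F i)))^2) = 0" by (simp only: of_real_eq_0_iff)
    hence "A * (norm x)^2 \<le> 0" using lower[of x] by simp
    thus ?thesis using A by (simp add: mult_le_0_iff)
  qed
  hence "inj (frame_op N F)" using linear_injective_0[OF lin] by blast
  thus ?thesis using linear_injective_imp_surjective[OF lin] by (simp add: bij_def)
qed

lemma frame_op_frame_op_inv: "is_frame N F \<Longrightarrow> frame_op N F (frame_op_inv N F y) = y"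
  unfolding frame_op_inv_def by (simp add: frame_op_bij bij_is_surj surj_f_inv_f)

lemma frame_op_inv_frame_op: "is_frame N F \<Longrightarrow> frame_op_inv N F (frame_op N F y) = y"
  unfolding frame_op_inv_def by (simp add: frame_op_bij bij_is_inj)

lemma frame_op_inv_clinear:
  fixes F :: "nat \<Rightarrow> complex^'n"
  assumes "is_frame N F"
  shows "clinear_op (frame_op_inv N F)"
  unfolding clinear_op_def
proof (intro conjI allI)
  let ?S = "frame_op N F" and ?Si = "frame_op_inv N F"
  fix x y :: "complex^'n" and c :: complex
  have "?S (?Si x + ?Si y) = x + y" "?S (c *s ?Si x) = c *s x"
    using frame_op_clinear[of N F] by (simp_all add: clinear_op_def frame_op_frame_op_inv[OF assms])
  thus "?Si (x + y) = ?Si x + ?Si y" "?Si (c *s x) = c *s ?Si x"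
    by (metis frame_op_inv_frame_op[OF assms])+
qed

lemma frame_op_eigenvector_if_inv:
  assumes "is_frame N F" and "frame_op_inv N F v = complex_of_real a *s v" and "a \<noteq> 0"
  shows "frame_op N F v = complex_of_real (1 / a) *s v"
proof -
  have "complex_of_real a *s frame_op N F v = frame_op N F (frame_op_inv N F v)"
    using frame_op_clinear[of N F] by (simp add: assms(2) clinear_op_def)
  also have "\<dots> = v" by (rule frame_op_frame_op_inv[OF assms(1)])
  finally have "complex_of_real (1 / a) *s (complex_of_real a *s frame_op N F v)
      = complex_of_real (1 / a) *s v" by simp
  thus ?thesis using assms(3) by (simp add:)
qed

lemma canonical_dual_is_dual:
  assumes "is_frame N F"
  shows "is_dual N F (\<lambda>i. frame_op_inv N F (F i))"
  unfolding is_dual_def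
proof
  fix x
  let ?S = "frame_op N F" and ?Si = "frame_op_inv N F"
  have "cinner (?Si x) (F i) = cinner x (?Si (F i))" for i
    using frame_op_self_adjoint[of N F "?Si x" "?Si (F i)"]
    by (simp add: frame_op_frame_op_inv[OF assms])
  hence "?S (?Si x) = (\<Sum>i<N. cinner x (?Si (F i)) *s F i)"
    by (simp add: frame_op_def)
  thus "x = (\<Sum>i<N. cinner x (?Si (F i)) *s F i)"
    by (simp add: frame_op_frame_op_inv[OF assms])
qed

lemma self_adjoint_eigenvectors_orthogonal:
  assumes "\<And>x y. cinner (T x) y = cinner x (T y)"
    and "T u = complex_of_real a *s u" "T v = complex_of_real b *s v" "a \<noteq> b"
  shows "cinner u v = 0"
proof -
  have "complex_of_real a * cinner u v = complex_of_real b * cinner u v"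
    using assms(1)[of u v] by (simp add: assms(2,3) cinner_smult_left cinner_smult_right)
  thus ?thesis using assms(4) by simp
qed

lemma frame_op_inv_eigenvectors_orthogonal:
  assumes "is_frame N F"
    and "frame_op_inv N F u = complex_of_real a *s u" "frame_op_inv N F v = complex_of_real b *s v"
    and "0 < a" "0 < b" "a \<noteq> b"
  shows "cinner u v = 0"
proof (rule self_adjoint_eigenvectors_orthogonal[OF frame_op_self_adjoint])
  show "frame_op N F u = complex_of_real (1 / a) *s u"
    by (rule frame_op_eigenvector_if_inv[OF assms(1,2)]) (use assms(4) in simp)
  show "frame_op N F v = complex_of_real (1 / b) *s v"
    by (rule frame_op_eigenvector_if_inv[OF assms(1,3)]) (use assms(5) in simp)
  show "1 / a \<noteq> 1 / b" using assms by simp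
qed

text \<open>If (R - s)v were nonzero it would be an eigenvector of the positive operator R for the
  negative eigenvalue -s.\<close>
lemma positive_op_square_eigenvector:
  assumes R: "positive_op R" and RR: "R (R v) = complex_of_real (s^2) *s v" and s: "0 < s"
  shows "R v = complex_of_real s *s v"
proof -
  have lin: "clinear_op R" using R unfolding positive_op_def by blast
  define w where "w = R v - complex_of_real s *s v"
  have "R w = complex_of_real (s^2) *s v - complex_of_real s *s R v"
    using lin by (simp add: w_def clinear_op_diff RR) (simp add: clinear_op_def)
  also have "\<dots> = complex_of_real (- s) *s w"
    by (simp add: w_def vec_eq_iff algebra_simps power2_eq_square)
  finally have Rw: "R w = complex_of_real (- s) *s w" .
  have "Re (cinner (R w) w) = - s * (norm w)^2"
    unfolding Rw cinner_smult_left cinner_self by simp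
  moreover have "0 \<le> Re (cinner (R w) w)" using R unfolding positive_op_def by blast
  ultimately have "w = 0" using s by (simp add: mult_le_0_iff)
  thus ?thesis by (simp add: w_def)
qed

lemma positive_op_scaling_frame_exists:
  assumes dual: "is_dual N F (\<lambda>i. complex_of_real (c i) *s F i)"
    and nonneg: "\<And>i. i < N \<Longrightarrow> 0 \<le> c i"
    and orth: "\<And>i k. i < N \<Longrightarrow> k < N \<Longrightarrow> c i \<noteq> c k \<Longrightarrow> cinner (F k) (F i) = 0"
  shows "\<exists>R. positive_op R \<and> (\<forall>k<N. R (F k) = complex_of_real (sqrt (c k)) *s F k)"
proof (intro exI conjI allI impI)
  define R where "R x = (\<Sum>i<N. complex_of_real (c i * sqrt (c i)) * cinner x (F i) *s F i)" for x
  have recon: "x = (\<Sum>i<N. complex_of_real (c i) * cinner x (F i) *s F i)" for x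
    using dual unfolding is_dual_def by (simp add: cinner_smult_right)
  have "clinear_op R"
    unfolding clinear_op_def R_def
    by (simp add: cinner_add_left cinner_smult_left vec_eq_iff sum_distrib_left
        sum.distrib algebra_simps)
  moreover have "Im (cinner (R x) x) = 0 \<and> 0 \<le> Re (cinner (R x) x)" for x
  proof -
    have "cinner (R x) x = complex_of_real (\<Sum>i<N. c i * sqrt (c i) * (cmod (cinner x (F i)))^2)"
      unfolding R_def of_real_sum
      by (simp add: cinner_sum_left cinner_smult_left mult.assoc cinner_mult_cnj_self)
    moreover have "0 \<le> (\<Sum>i<N. c i * sqrt (c i) * (cmod (cinner x (F i)))^2)"
      by (rule sum_nonneg) (simp add: nonneg)
    ultimately show ?thesis by simp
  qed
  ultimately show "positive_op R" unfolding positive_op_def by blast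
  fix k assume k: "k < N"
  \<comment> \<open>only the terms with c i = c k survive, by orthogonality\<close>
  have "R (F k) = (\<Sum>i<N. complex_of_real (sqrt (c k)) *s
                     (complex_of_real (c i) * cinner (F k) (F i) *s F i))"
    unfolding R_def
  proof (rule sum.cong)
    fix i assume "i \<in> {..<N}"
    thus "complex_of_real (c i * sqrt (c i)) * cinner (F k) (F i) *s F i =
          complex_of_real (sqrt (c k)) *s (complex_of_real (c i) * cinner (F k) (F i) *s F i)"
      using orth[of i k] k by (cases "c i = c k") (simp_all add: mult.assoc mult.left_commute)
  qed simp
  also have "\<dots> = complex_of_real (sqrt (c k)) *s F k"
    unfolding smult_sum_right[symmetric] recon[of "F k", symmetric] ..
  finally show "R (F k) = complex_of_real (sqrt (c k)) *s F k" .
qed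

text \<open>The positive square root is built explicitly on the frame, and it is unique because any
  positive square root is forced on each eigenvector.\<close>
lemma frame_op_inv_sqrt_eigenvector:
  assumes fr: "is_frame N F"
    and eig: "\<And>i. i < N \<Longrightarrow> frame_op_inv N F (F i) = complex_of_real (c i) *s F i"
    and pos: "\<And>i. i < N \<Longrightarrow> 0 < c i"
    and k: "k < N"
  shows "frame_op_inv_sqrt N F (F k) = complex_of_real (sqrt (c k)) *s F k"
proof -
  let ?Si = "frame_op_inv N F"
  have "is_dual N F (\<lambda>i. ?Si (F i)) \<longleftrightarrow> is_dual N F (\<lambda>i. complex_of_real (c i) *s F i)"
    by (rule is_dual_cong) (simp_all add: eig)
  with canonical_dual_is_dual[OF fr]
  have dual: "is_dual N F (\<lambda>i. complex_of_real (c i) *s F i)" by blast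
  have orth: "cinner (F k) (F i) = 0" if "i < N" "k < N" "c i \<noteq> c k" for i k
    using that by (intro frame_op_inv_eigenvectors_orthogonal[OF fr eig eig pos pos]) auto
  have "\<exists>R. positive_op R \<and> (\<forall>k<N. R (F k) = complex_of_real (sqrt (c k)) *s F k)"
    by (rule positive_op_scaling_frame_exists[OF dual]) (simp_all add: pos less_imp_le orth)
  then obtain R where R: "positive_op R"
    and RF: "\<And>k. k < N \<Longrightarrow> R (F k) = complex_of_real (sqrt (c k)) *s F k"
    by blast
  have Rlin: "clinear_op R" using R unfolding positive_op_def by blast
  have RR: "(\<lambda>x. R (R x)) = ?Si"
  proof (rule clinear_op_eq_on_dual[OF clinear_op_comp[OF Rlin Rlin] frame_op_inv_clinear[OF fr] dual])
    fix i assume i: "i < N"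
    have "R (R (F i)) = complex_of_real (sqrt (c i)) *s R (F i)"
      using Rlin by (simp add: RF[OF i] clinear_op_def)
    also have "\<dots> = ?Si (F i)"
      using pos[OF i] by (simp add: RF[OF i] eig[OF i] flip: of_real_mult)
    finally show "R (R (F i)) = ?Si (F i)" .
  qed
  have unique: "R' = R" if R': "positive_op R'" "\<And>x. R' (R' x) = ?Si x" for R'
  proof (rule clinear_op_eq_on_dual[OF _ Rlin dual])
    show "clinear_op R'" using R' unfolding positive_op_def by blast
    fix i assume i: "i < N"
    have "R' (R' (F i)) = complex_of_real ((sqrt (c i))^2) *s F i"
      using pos[OF i] by (simp add: R'(2) eig[OF i])
    from positive_op_square_eigenvector[OF R'(1) this] pos[OF i]
    have "R' (F i) = complex_of_real (sqrt (c i)) *s F i" by simp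
    thus "R' (F i) = R (F i)" by (simp add: RF[OF i])
  qed
  have "frame_op_inv_sqrt N F = R"
    unfolding frame_op_inv_sqrt_def
  proof (rule the_equality)
    show "positive_op R \<and> (\<forall>x. R (R x) = ?Si x)" using R RR by (simp add: fun_eq_iff)
  qed (use unique in blast)
  thus ?thesis using RF[OF k] by simp
qed

definition rank_one_op :: "complex^'n \<Rightarrow> complex^'n \<Rightarrow> complex^'n \<Rightarrow> complex^'n" where
  "rank_one_op a b f = cinner f a *s b"

lemma E_op_singleton: "E_op {i} F G = rank_one_op (F i) (G i)"
  by (rule ext) (simp add: E_op_def rank_one_op_def)

lemma cinner_rank_one_op_self: "cinner (rank_one_op a b f) f = cinner f a * cinner b f"
  by (simp add: rank_one_op_def cinner_smult_left)

lemma bdd_above_num_radius_rank_one: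
  "bdd_above ((\<lambda>f. cmod (cinner (rank_one_op a b f) f)) ` {f::complex^'n. norm f = 1})"
proof (rule bdd_aboveI2)
  fix f :: "complex^'n" assume "f \<in> {f. norm f = 1}"
  hence "norm f = 1" by simp
  moreover have "cmod (cinner f a) * cmod (cinner b f) \<le> (norm f * norm a) * (norm b * norm f)"
    by (intro mult_mono cmod_cinner_le) auto
  ultimately show "cmod (cinner (rank_one_op a b f) f) \<le> norm a * norm b"
    by (simp add: cinner_rank_one_op_self norm_mult)
qed

lemma num_radius_rank_one_ge:
  fixes v :: "complex^'n"
  assumes "v \<noteq> 0"
  shows "cmod (cinner v a * cinner b v) / (norm v)^2 \<le> num_radius (rank_one_op a b)"
proof -
  define u where "u = complex_of_real (1 / norm v) *s v"
  have "norm u = 1" using assms by (simp add: u_def norm_smult_vec_complex norm_divide)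
  hence "cmod (cinner u a * cinner b u) \<le> num_radius (rank_one_op a b)"
    unfolding num_radius_def
    using cSUP_upper[OF _ bdd_above_num_radius_rank_one, of u a b]
    by (simp add: cinner_rank_one_op_self)
  moreover have "cinner u a * cinner b u = complex_of_real (1 / (norm v)^2) * (cinner v a * cinner b v)"
    by (simp add: u_def cinner_smult_left cinner_smult_right power2_eq_square)
  ultimately show ?thesis by (simp add: norm_mult norm_divide norm_power)
qed

lemma num_radius_rank_one_le:
  assumes "\<And>v::complex^'n. norm v = 1 \<Longrightarrow> cmod (cinner v a * cinner b v) \<le> M"
  shows "num_radius (rank_one_op a b) \<le> M"
  unfolding num_radius_def
proof (rule cSUP_least)
  show "{f::complex^'n. norm f = 1} \<noteq> {}" using norm_axis_complex by blast
  fix v :: "complex^'n" assume "v \<in> {f. norm f = 1}"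
  thus "cmod (cinner (rank_one_op a b v) v) \<le> M"
    using assms[of v] by (simp add: cinner_rank_one_op_self)
qed

lemma num_radius_rank_one_nonneg: "0 \<le> num_radius (rank_one_op a (b::complex^'n))"
proof -
  have "axis undefined 1 \<noteq> (0::complex^'n)"
    using norm_axis_complex[of undefined] by (metis norm_zero zero_neq_one)
  from num_radius_rank_one_ge[OF this, of a b] show ?thesis
    by (meson divide_nonneg_nonneg norm_ge_zero zero_le_power2 order_trans)
qed

lemma cmod_cinner_le_num_radius_rank_one: "cmod (cinner a b) \<le> num_radius (rank_one_op a b)"
proof (cases "a = 0")
  case True thus ?thesis using num_radius_rank_one_nonneg[of a b] by simp
next
  case False
  have "cmod (cinner a a * cinner b a) / (norm a)^2 = cmod (cinner a b)"
    using False by (simp add: cinner_self cinner_commute[of b a] norm_mult norm_power)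
  thus ?thesis using num_radius_rank_one_ge[OF False, of a b] by simp
qed

text \<open>Equality case of the previous bound for a positive inner product r: testing the numerical
  radius at v = \<parallel>b\<parallel> a + \<parallel>a\<parallel> b gives \<parallel>a\<parallel> \<parallel>b\<parallel> \<le> r, which is equality in Cauchy-Schwarz.\<close>
lemma rank_one_num_radius_le_cinner_imp_parallel:
  fixes a b :: "complex^'n"
  assumes r: "0 < r" and ab: "cinner a b = complex_of_real r"
    and nr: "num_radius (rank_one_op a b) \<le> r"
  shows "b = complex_of_real (r / (norm a)^2) *s a"
proof -
  have "a \<noteq> 0" "b \<noteq> 0" using ab r by auto
  hence na: "norm a > 0" and nb: "norm b > 0" by auto
  have ba: "cinner b a = complex_of_real r" using ab by (simp add: cinner_commute[of b a])
  note aa = cinner_self[of a] and bb = cinner_self[of b]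
  define p where "p = norm a * norm b"
  have p: "p > 0" using na nb by (simp add: p_def)
  define v where "v = complex_of_real (norm b) *s a + complex_of_real (norm a) *s b"
  have prod: "cinner v a * cinner b v = complex_of_real (p * (p + r) * (p + r))"
    by (simp add: v_def cinner_add_left cinner_add_right cinner_smult_left cinner_smult_right
        aa bb ba p_def power2_eq_square algebra_simps)
  have num: "cmod (cinner v a * cinner b v) = p * (p + r) * (p + r)"
    unfolding prod norm_of_real using p r by simp
  have "cinner v v = complex_of_real (2 * p * (p + r))"
    by (simp add: v_def cinner_add_right cinner_add_left cinner_smult_right cinner_smult_left
        aa bb ab ba p_def power2_eq_square algebra_simps)
  hence den: "(norm v)^2 = 2 * p * (p + r)"
    by (simp only: cinner_self of_real_eq_iff)
  hence "v \<noteq> 0" using p r by auto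
  from num_radius_rank_one_ge[OF this, of a b] nr
  have "p * (p + r) * (p + r) / (2 * p * (p + r)) \<le> r" by (simp add: num den)
  moreover have "p * (p + r) * (p + r) / (2 * p * (p + r)) = (p + r) / 2"
    using p r by (simp add: power2_eq_square)
  ultimately have pr: "p \<le> r" by simp
  define c where "c = r / (norm a)^2"
  define w where "w = b - complex_of_real c *s a"
  have "cinner w w = complex_of_real ((norm b)^2 - 2 * c * r + c^2 * (norm a)^2)"
    by (simp add: w_def cinner_diff_right cinner_diff_left cinner_smult_right cinner_smult_left
        aa bb ab ba power2_eq_square algebra_simps)
  hence "(norm w)^2 = (norm b)^2 - 2 * c * r + c^2 * (norm a)^2"
    by (simp only: cinner_self of_real_eq_iff)
  also have "c^2 * (norm a)^2 = c * r" using na by (simp add: c_def power2_eq_square)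
  finally have "(norm w)^2 = (norm b)^2 - c * r" by simp
  moreover have "(norm b)^2 \<le> c * r"
  proof -
    have "(norm a * norm b)^2 \<le> r^2" using pr p unfolding p_def by (intro power_mono) auto
    thus ?thesis using na by (simp add: c_def field_simps power2_eq_square)
  qed
  ultimately have "(norm w)^2 \<le> 0" by simp
  hence "w = 0" by simp
  thus ?thesis by (simp add: w_def c_def)
qed

lemma dual_trace_eq_dim:
  fixes F G :: "nat \<Rightarrow> complex^'n"
  assumes "is_dual N F G"
  shows "(\<Sum>i<N. cinner (F i) (G i)) = of_nat CARD('n)"
proof -
  have diag: "(\<Sum>i<N. F i $ k * cnj (G i $ k)) = 1" for k
  proof -
    have "axis k (1::complex) = (\<Sum>i<N. cinner (axis k 1) (G i) *s F i)"
      using assms unfolding is_dual_def by blast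
    hence "axis k (1::complex) $ k = (\<Sum>i<N. cinner (axis k 1) (G i) *s F i) $ k" by simp
    thus ?thesis by (simp add: cinner_axis_left mult.commute)
  qed
  have "(\<Sum>i<N. cinner (F i) (G i)) = (\<Sum>k\<in>(UNIV::'n set). \<Sum>i<N. F i $ k * cnj (G i $ k))"
    unfolding cinner_def by (rule sum.swap)
  thus ?thesis by (simp add: diag)
qed

lemma sum_attains_bound_imp_eq:
  fixes s :: "nat \<Rightarrow> complex"
  assumes sum: "(\<Sum>i<N. s i) = of_real (real N * r)"
    and le: "\<And>i. i < N \<Longrightarrow> cmod (s i) \<le> r"
    and i: "i < N"
  shows "s i = of_real r"
proof -
  have "(\<Sum>i<N. r - Re (s i)) = 0"
    using arg_cong[OF sum, of Re] by (simp add: sum_subtractf)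
  moreover have "\<And>i. i < N \<Longrightarrow> 0 \<le> r - Re (s i)"
    using le complex_Re_le_cmod order_trans by fastforce
  ultimately have re: "Re (s i) = r"
    using i sum_nonneg_eq_0_iff[of "{..<N}" "\<lambda>i. r - Re (s i)"] by auto
  have "(cmod (s i))^2 \<le> r^2" using le[OF i] by (simp add: power_mono)
  hence "Im (s i) = 0" using re by (simp add: cmod_power2)
  with re show ?thesis by (simp add: complex_eq_iff)
qed

lemma sum_cis_roots_of_unity:
  fixes d :: int
  assumes N: "N > 0" and d: "d \<noteq> 0" "\<bar>d\<bar> < int N"
  shows "(\<Sum>i<N. cis (real i * (2 * pi * of_int d / real N))) = 0"
proof -
  define \<theta> where "\<theta> = 2 * pi * of_int d / real N"
  define z where "z = cis \<theta>"
  have zi: "z ^ i = cis (real i * \<theta>)" for i by (simp add: z_def Complex.DeMoivre)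
  have "z ^ N = 1" using N by (simp add: zi \<theta>_def)
  moreover have "z \<noteq> 1"
  proof
    assume "z = 1"
    then obtain n :: int where "\<theta> = 2 * of_int n * pi"
      by (auto simp: z_def cis_conv_exp exp_eq_1)
    hence "of_int d = real N * of_int n" using N by (simp add: \<theta>_def field_simps)
    hence dn: "d = int N * n" by (metis of_int_eq_iff of_int_mult of_int_of_nat_eq)
    hence "\<bar>d\<bar> \<ge> int N" using d(1) by (simp add: abs_mult mult_le_cancel_left1 N)
    thus False using d(2) by simp
  qed
  ultimately have "(\<Sum>i<N. z ^ i) = 0" by (simp add: geometric_sum)
  thus ?thesis by (simp add: zi \<theta>_def)
qed

definition harmonic_frame :: "nat \<Rightarrow> ('n::finite \<Rightarrow> nat) \<Rightarrow> nat \<Rightarrow> complex^'n" where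
  "harmonic_frame N e i =
     (\<chi> j. complex_of_real (1 / sqrt (real N)) * cis (real i * (2 * pi * real (e j) / real N)))"

lemma harmonic_frame_entry_product:
  "cnj (harmonic_frame N e i $ j) * harmonic_frame N e i $ k
     = complex_of_real (1 / real N) * cis (real i * (2 * pi * of_int (int (e k) - int (e j)) / real N))"
proof -
  have "complex_of_real (sqrt (real N)) * complex_of_real (sqrt (real N)) = of_nat N"
    by (simp only: of_real_mult[symmetric] real_sqrt_mult_self) simp
  thus ?thesis
    by (simp add: harmonic_frame_def cis_cnj cis_mult algebra_simps diff_divide_distrib)
qed

lemma harmonic_frame_orthonormal_columns:
  assumes e: "inj e" "\<And>j. e j < N"
  shows "(\<Sum>i<N. cnj (harmonic_frame N e i $ j) * harmonic_frame N e i $ k) = (if j = k then 1 else 0)"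
proof (cases "j = k")
  case True
  thus ?thesis using e(2)[of j] by (simp add: harmonic_frame_entry_product)
next
  case False
  define d where "d = int (e k) - int (e j)"
  have "N > 0" using e(2)[of j] by simp
  moreover have "d \<noteq> 0" using False e(1) unfolding d_def by (auto dest: injD)
  moreover have "\<bar>d\<bar> < int N" using e(2)[of j] e(2)[of k] unfolding d_def by linarith
  ultimately have "(\<Sum>i<N. cis (real i * (2 * pi * of_int d / real N))) = 0"
    by (rule sum_cis_roots_of_unity)
  moreover have "(\<Sum>i<N. cnj (harmonic_frame N e i $ j) * harmonic_frame N e i $ k)
      = complex_of_real (1 / real N) * (\<Sum>i<N. cis (real i * (2 * pi * of_int d / real N)))"
    by (simp add: harmonic_frame_entry_product sum_distrib_left d_def)
  ultimately show ?thesis using False by simp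
qed

lemma harmonic_frame_self_dual:
  fixes e :: "'n::finite \<Rightarrow> nat"
  assumes "inj e" "\<And>j. e j < N"
  shows "is_dual N (harmonic_frame N e) (harmonic_frame N e)"
  unfolding is_dual_def
proof
  fix x :: "complex^'n"
  have "(\<Sum>i<N. cinner x (harmonic_frame N e i) *s harmonic_frame N e i) $ k = x $ k" for k
  proof -
    have "(\<Sum>i<N. cinner x (harmonic_frame N e i) *s harmonic_frame N e i) $ k
        = (\<Sum>j\<in>UNIV. x $ j * (\<Sum>i<N. cnj (harmonic_frame N e i $ j) * harmonic_frame N e i $ k))"
      by (simp add: cinner_def sum_distrib_right sum_distrib_left mult.assoc sum.swap[of _ "{..<N}"])
    also have "\<dots> = x $ k"
      by (simp add: harmonic_frame_orthonormal_columns[OF assms] if_distrib cong: if_cong)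
    finally show ?thesis .
  qed
  thus "x = (\<Sum>i<N. cinner x (harmonic_frame N e i) *s harmonic_frame N e i)"
    by (simp add: vec_eq_iff)
qed

lemma power2_norm_harmonic_frame:
  "(norm (harmonic_frame N e i :: complex^'n::finite))^2 = real CARD('n) / real N"
  unfolding power2_norm_vec_complex
  by (simp add: harmonic_frame_def norm_mult norm_divide power_divide)

lemma self_dual_imp_parseval:
  assumes "is_dual N H H"
  shows "is_parseval N H"
  unfolding is_parseval_def
proof
  fix x
  have "cinner x x = cinner x (\<Sum>i<N. cinner x (H i) *s H i)"
    using assms unfolding is_dual_def by metis
  also have "\<dots> = (\<Sum>i<N. complex_of_real ((cmod (cinner x (H i)))^2))"
    unfolding cinner_sum_right[OF finite_lessThan] cinner_smult_right
    by (rule sum.cong, simp, subst complex_norm_square, simp add: mult.commute)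
  also have "\<dots> = complex_of_real (\<Sum>i<N. (cmod (cinner x (H i)))^2)"
    by (simp only: of_real_sum)
  finally show "(\<Sum>i<N. (cmod (cinner x (H i)))^2) = (norm x)^2"
    by (simp only: cinner_self of_real_eq_iff)
qed

lemma parseval_imp_frame: "is_parseval N H \<Longrightarrow> is_frame N H"
  unfolding is_parseval_def is_frame_def by (rule exI[of _ 1], rule exI[of _ 1]) simp

lemma num_radius_le_eta1_FG: "i < N \<Longrightarrow> num_radius (E_op {i} F G) \<le> eta1_FG N F G"
  unfolding eta1_FG_def by (intro Max_ge) auto

lemma eta1_FG_nonneg: "0 < N \<Longrightarrow> 0 \<le> eta1_FG N F G"
  using num_radius_le_eta1_FG[of 0 N F G] num_radius_rank_one_nonneg
  by (metis E_op_singleton order_trans)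

lemma eta1_le_dim_div:
  assumes card: "CARD('n::finite) \<le> N"
  shows "eta1 N TYPE('n) \<le> real CARD('n) / real N"
proof -
  have "0 < CARD('n)" by simp
  hence N: "0 < N" using card by linarith
  obtain e :: "'n \<Rightarrow> nat" and m where "e ` UNIV = {i. i < m}" "inj e"
    using finite_imp_inj_to_nat_seg[of "UNIV :: 'n set"] by auto
  moreover from this have "m = CARD('n)" by (metis card_Collect_less_nat card_image)
  ultimately have "inj e" "e j < CARD('n)" for j by auto
  hence e: "inj e" "\<And>j. e j < N" using card order_less_le_trans by auto
  define H where "H = harmonic_frame N e"
  have dual: "is_dual N H H" unfolding H_def by (rule harmonic_frame_self_dual[OF e])
  have "eta1_FG N H H \<le> real CARD('n) / real N"
    unfolding eta1_FG_def
  proof (rule Max.boundedI)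
    fix a assume "a \<in> (\<lambda>i. num_radius (E_op {i} H H)) ` {..<N}"
    then obtain i where a: "a = num_radius (rank_one_op (H i) (H i))"
      by (auto simp: E_op_singleton)
    show "a \<le> real CARD('n) / real N" unfolding a
    proof (rule num_radius_rank_one_le)
      fix v :: "complex^'n" assume v: "norm v = 1"
      have "cmod (cinner v (H i) * cinner (H i) v) = (cmod (cinner v (H i)))^2"
        unfolding cinner_mult_cnj_self norm_of_real by simp
      also have "\<dots> \<le> (norm v * norm (H i))^2"
        by (intro power_mono cmod_cinner_le) simp
      also have "\<dots> = real CARD('n) / real N"
        using v by (simp add: H_def power2_norm_harmonic_frame)
      finally show "cmod (cinner v (H i) * cinner (H i) v) \<le> real CARD('n) / real N" .
    qed
  qed (use N in auto)
  moreover have "eta1 N TYPE('n) \<le> eta1_FG N H H"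
    unfolding eta1_def
  proof (rule cInf_lower)
    show "eta1_FG N H H \<in> {eta1_FG N F G |(F :: nat \<Rightarrow> complex^'n) G. dual_pair N F G}"
      using dual self_dual_imp_parseval parseval_imp_frame unfolding dual_pair_def by blast
    show "bdd_below {eta1_FG N F G |(F :: nat \<Rightarrow> complex^'n) G. dual_pair N F G}"
      by (rule bdd_belowI[of _ 0]) (auto intro: eta1_FG_nonneg[OF N])
  qed
  ultimately show ?thesis by linarith
qed

lemma in_N1_imp_scaled_dual:
  fixes F G :: "nat \<Rightarrow> complex^'n::finite"
  assumes card: "CARD('n) \<le> N" and N1: "in_N1 N F G" and i: "i < N"
  shows "F i \<noteq> 0" and "G i = complex_of_real ((real CARD('n) / real N) / (norm (F i))^2) *s F i"
proof -
  define r where "r = real CARD('n) / real N"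
  have "0 < CARD('n)" by simp
  hence N: "0 < N" using card by linarith
  hence r: "r > 0" by (simp add: r_def)
  have dual: "is_dual N F G" and eta: "eta1_FG N F G \<le> r"
    using N1 eta1_le_dim_div[OF card] unfolding in_N1_def dual_pair_def r_def by auto
  have nr: "num_radius (rank_one_op (F j) (G j)) \<le> r" if "j < N" for j
    using num_radius_le_eta1_FG[OF that, of F G] eta by (simp add: E_op_singleton)
  have "(\<Sum>j<N. cinner (F j) (G j)) = complex_of_real (real N * r)"
    using dual_trace_eq_dim[OF dual] N by (simp add: r_def)
  moreover have "cmod (cinner (F j) (G j)) \<le> r" if "j < N" for j
    using cmod_cinner_le_num_radius_rank_one[of "F j" "G j"] nr[OF that] by linarith
  ultimately have tr: "cinner (F i) (G i) = complex_of_real r"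
    by (rule sum_attains_bound_imp_eq[OF _ _ i])
  thus "F i \<noteq> 0" using r by auto
  show "G i = complex_of_real (r / (norm (F i))^2) *s F i"
    by (rule rank_one_num_radius_le_cinner_imp_parallel[OF r tr nr[OF i]])
qed

lemma is_dual_sqrt_scaled_self:
  assumes "is_dual N F (\<lambda>i. complex_of_real (c i) *s F i)" and "\<And>i. i < N \<Longrightarrow> 0 \<le> c i"
  shows "is_dual N (\<lambda>i. complex_of_real (sqrt (c i)) *s F i) (\<lambda>i. complex_of_real (sqrt (c i)) *s F i)"
proof -
  have "(\<Sum>i<N. cinner x (complex_of_real (c i) *s F i) *s F i)
      = (\<Sum>i<N. cinner x (complex_of_real (sqrt (c i)) *s F i) *s (complex_of_real (sqrt (c i)) *s F i))"
    for x
  proof (rule sum.cong)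
    fix i assume "i \<in> {..<N}"
    hence "complex_of_real (c i) = complex_of_real (sqrt (c i)) * complex_of_real (sqrt (c i))"
      using assms(2) by (simp flip: of_real_mult)
    thus "cinner x (complex_of_real (c i) *s F i) *s F i
        = cinner x (complex_of_real (sqrt (c i)) *s F i) *s (complex_of_real (sqrt (c i)) *s F i)"
      by (simp add: cinner_smult_right mult.commute mult.left_commute)
  qed simp
  thus ?thesis using assms(1) unfolding is_dual_def by simp
qed

theorem theorem5p3:
  fixes N :: nat and F :: "nat \<Rightarrow> complex^'n"
  assumes "CARD('n) \<le> N"
    and "is_frame N F"
    and "in_N1 N F (\<lambda>i. frame_op_inv N F (F i))"
  shows "is_frame N (\<lambda>i. frame_op_inv_sqrt N F (F i))
       \<and> is_parseval N (\<lambda>i. frame_op_inv_sqrt N F (F i))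
       \<and> is_equal_norm N (\<lambda>i. frame_op_inv_sqrt N F (F i))
       \<and> (\<forall>G. in_N1 N F G \<longrightarrow> (\<forall>i<N. G i = frame_op_inv N F (F i)))"
proof -
  define r where "r = real CARD('n) / real N"
  define c where "c i = r / (norm (F i))^2" for i
  have "0 < CARD('n)" by simp
  hence "0 < N" using assms(1) by linarith
  hence r: "0 < r" by (simp add: r_def)
  note scaled = in_N1_imp_scaled_dual[OF assms(1), folded r_def]
  have inv: "frame_op_inv N F (F i) = complex_of_real (c i) *s F i" if "i < N" for i
    using scaled(2)[OF assms(3) that] by (simp add: c_def)
  have c: "0 < c i" if "i < N" for i
    using scaled(1)[OF assms(3) that] r by (simp add: c_def)
  define h where "h i = frame_op_inv_sqrt N F (F i)" for i
  have h: "h i = complex_of_real (sqrt (c i)) *s F i" if "i < N" for i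
    unfolding h_def by (rule frame_op_inv_sqrt_eigenvector[OF assms(2) inv c that])
  have "is_dual N F (\<lambda>i. frame_op_inv N F (F i)) \<longleftrightarrow> is_dual N F (\<lambda>i. complex_of_real (c i) *s F i)"
    by (rule is_dual_cong) (simp_all add: inv)
  with canonical_dual_is_dual[OF assms(2)]
  have "is_dual N (\<lambda>i. complex_of_real (sqrt (c i)) *s F i) (\<lambda>i. complex_of_real (sqrt (c i)) *s F i)"
    using c by (intro is_dual_sqrt_scaled_self) (auto intro: less_imp_le)
  moreover have "is_dual N (\<lambda>i. complex_of_real (sqrt (c i)) *s F i) (\<lambda>i. complex_of_real (sqrt (c i)) *s F i)
      \<longleftrightarrow> is_dual N h h" by (rule is_dual_cong) (simp_all add: h)
  ultimately have "is_dual N h h" by blast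
  hence parseval: "is_parseval N h" by (rule self_dual_imp_parseval)
  have "norm (h i) = sqrt r" if "i < N" for i
  proof -
    have "norm (h i) = sqrt (c i) * norm (F i)"
      using c[OF that] by (simp add: h[OF that] norm_smult_vec_complex)
    also have "\<dots> = sqrt r"
      using scaled(1)[OF assms(3) that] by (simp add: c_def real_sqrt_divide)
    finally show ?thesis .
  qed
  hence "is_equal_norm N h" unfolding is_equal_norm_def by simp
  moreover have "\<forall>G. in_N1 N F G \<longrightarrow> (\<forall>i<N. G i = frame_op_inv N F (F i))"
  proof (intro allI impI)
    fix G i assume "in_N1 N F G" "i < N"
    thus "G i = frame_op_inv N F (F i)" using scaled(2)[of F G i] by (simp add: inv c_def)
  qed
  ultimately show ?thesis using parseval parseval_imp_frame unfolding h_def by blast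
qed

end
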